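(* Let $\Omega\subset\mathbb{R}^n$ be Lebesgue measurable with finite measure, let $f$ satisfy Assumption A, let $L>L_f$, and let $g=\delta_{\mathbb{Z}}$. Let $u_0\in L^2(\Omega)$ and let $(u_k)$ be a sequence such that for every $k\ge0$, $u_{k+1}$ is a global minimizer over $u\in L^2(\Omega)$ of \[ f(u_k)+\int_\Omega\nabla f(u_k)(u-u_k)\,dx+\frac L2\|u-u_k\|_{L^2(\Omega)}^2+\int_\Omega\delta_{\mathbb{Z}}(u(x))\,dx . \] If $u^*\in L^2(\Omega)$ is a weak sequential limit point of $(u_k)$, then the whole sequence satisfies $u_k\to u^*$ in $L^1(\Omega)$.
   Context: Assumption A: $f:L^2(\Omega)\to\mathbb{R}$ is bounded from below, weakly lower semicontinuous, Fréchet differentiable, and $\nabla f:L^2(\Omega)\to L^2(\Omega)$ is Lipschitz continuous with constant $L_f$. $\delta_{\mathbb{Z}}(u)=0$ if $u\in\mathbb{Z}$ and $\delta_{\mathbb{Z}}(u)=+\infty$ otherwise. *)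

theory Defs
  imports "HOL-Analysis.Analysis"
begin

text \<open>Elements of L^2(Omega) are represented by real-valued functions on
  real^'n that are Lebesgue measurable on Omega and square integrable on Omega;
  all notions below are taken w.r.t. the measure lebesgue_on Omega.\<close>

definition L2 :: "(real^'n) set \<Rightarrow> (real^'n \<Rightarrow> real) set" where
  "L2 \<Omega> = {u. u \<in> borel_measurable (lebesgue_on \<Omega>) \<and>
                 integrable (lebesgue_on \<Omega>) (\<lambda>x. (u x)\<^sup>2)}"

definition L2_inner :: "(real^'n) set \<Rightarrow> (real^'n \<Rightarrow> real) \<Rightarrow> (real^'n \<Rightarrow> real) \<Rightarrow> real" where
  "L2_inner \<Omega> u v = integral\<^sup>L (lebesgue_on \<Omega>) (\<lambda>x. u x * v x)"

definition L2_norm :: "(real^'n) set \<Rightarrow> (real^'n \<Rightarrow> real) \<Rightarrow> real" where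
  "L2_norm \<Omega> u = sqrt (integral\<^sup>L (lebesgue_on \<Omega>) (\<lambda>x. (u x)\<^sup>2))"

definition ae_eq :: "(real^'n) set \<Rightarrow> (real^'n \<Rightarrow> real) \<Rightarrow> (real^'n \<Rightarrow> real) \<Rightarrow> bool" where
  "ae_eq \<Omega> u v \<longleftrightarrow> (AE x in lebesgue_on \<Omega>. u x = v x)"

definition L2_weak_conv :: "(real^'n) set \<Rightarrow> (nat \<Rightarrow> real^'n \<Rightarrow> real) \<Rightarrow> (real^'n \<Rightarrow> real) \<Rightarrow> bool" where
  "L2_weak_conv \<Omega> w u \<longleftrightarrow> (\<forall>k. w k \<in> L2 \<Omega>) \<and> u \<in> L2 \<Omega> \<and>
     (\<forall>v\<in>L2 \<Omega>. (\<lambda>k. L2_inner \<Omega> (w k) v) \<longlonglongrightarrow> L2_inner \<Omega> u v)"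

text \<open>Assumption A on f with gradient G and Lipschitz constant Lf.
  f and G are required to be well defined on equivalence classes.\<close>
definition assumptionA ::
  "(real^'n) set \<Rightarrow> ((real^'n \<Rightarrow> real) \<Rightarrow> real) \<Rightarrow> ((real^'n \<Rightarrow> real) \<Rightarrow> (real^'n \<Rightarrow> real)) \<Rightarrow> real \<Rightarrow> bool" where
  "assumptionA \<Omega> f G Lf \<longleftrightarrow>
     \<comment> \<open>f and G are well-defined on L^2 (independent of representative)\<close>
     (\<forall>u\<in>L2 \<Omega>. \<forall>v\<in>L2 \<Omega>. ae_eq \<Omega> u v \<longrightarrow> f u = f v \<and> ae_eq \<Omega> (G u) (G v)) \<and>
     \<comment> \<open>bounded from below\<close>
     (\<exists>c. \<forall>u\<in>L2 \<Omega>. c \<le> f u) \<and>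
     \<comment> \<open>weakly (sequentially) lower semicontinuous\<close>
     (\<forall>w u. L2_weak_conv \<Omega> w u \<longrightarrow> ereal (f u) \<le> liminf (\<lambda>k. ereal (f (w k)))) \<and>
     \<comment> \<open>Frechet differentiable with gradient G u in L^2\<close>
     (\<forall>u\<in>L2 \<Omega>. G u \<in> L2 \<Omega> \<and>
        (\<forall>\<epsilon>>0. \<exists>\<delta>>0. \<forall>h\<in>L2 \<Omega>. L2_norm \<Omega> h < \<delta> \<longrightarrow>
           \<bar>f (\<lambda>x. u x + h x) - f u - L2_inner \<Omega> (G u) h\<bar> \<le> \<epsilon> * L2_norm \<Omega> h)) \<and>
     \<comment> \<open>gradient Lipschitz with constant Lf\<close>
     0 \<le> Lf \<and>
     (\<forall>u\<in>L2 \<Omega>. \<forall>v\<in>L2 \<Omega>.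
        L2_norm \<Omega> (\<lambda>x. G u x - G v x) \<le> Lf * L2_norm \<Omega> (\<lambda>x. u x - v x))"

definition int_delta_Z :: "(real^'n) set \<Rightarrow> (real^'n \<Rightarrow> real) \<Rightarrow> ennreal" where
  "int_delta_Z \<Omega> u = (\<integral>\<^sup>+ x. (if u x \<in> \<int> then 0 else \<infinity>) \<partial>(lebesgue_on \<Omega>))"

definition model_obj ::
  "(real^'n) set \<Rightarrow> ((real^'n \<Rightarrow> real) \<Rightarrow> real) \<Rightarrow> ((real^'n \<Rightarrow> real) \<Rightarrow> (real^'n \<Rightarrow> real))
     \<Rightarrow> real \<Rightarrow> (real^'n \<Rightarrow> real) \<Rightarrow> (real^'n \<Rightarrow> real) \<Rightarrow> ereal" where
  "model_obj \<Omega> f G L uk u =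
     ereal (f uk + L2_inner \<Omega> (G uk) (\<lambda>x. u x - uk x)
            + L / 2 * (L2_norm \<Omega> (\<lambda>x. u x - uk x))\<^sup>2)
     + enn2ereal (int_delta_Z \<Omega> u)"

end

theory Submission
  imports Defs
begin

text \<open>
  Every iterate after the first is integer valued almost everywhere: otherwise the model
  objective is infinite, while it is finite at the zero function. For integer-valued functions
  |w| \<le> w^2, so the L1 length of a step is bounded by its squared L2 length. The descent
  lemma for the L_f-smooth part gives sufficient decrease
  f(u_{k+1}) \<le> f(u_k) - (L - L_f)/2 ||u_{k+1} - u_k||^2, and since f is bounded below the
  squared steps, hence the L1 steps, are summable. Finally the L1 distance to a weak limit is
  weakly lower semicontinuous (test with sgn(u_k - u*), which lies in L2 because \<Omega> has finite
  measure), so ||u_k - u*||_1 is bounded by the tail of the series of L1 steps.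
\<close>

lemma L2_borel_measurable: "u \<in> L2 \<Omega> \<Longrightarrow> u \<in> borel_measurable (lebesgue_on \<Omega>)"
  by (simp add: L2_def)

lemma L2_integrable_square: "u \<in> L2 \<Omega> \<Longrightarrow> integrable (lebesgue_on \<Omega>) (\<lambda>x. (u x)\<^sup>2)"
  by (simp add: L2_def)

lemma L2_integrable_mult:
  assumes "u \<in> L2 \<Omega>" "v \<in> L2 \<Omega>"
  shows "integrable (lebesgue_on \<Omega>) (\<lambda>x. u x * v x)"
proof (rule Bochner_Integration.integrable_bound[where f="\<lambda>x. (u x)\<^sup>2 + (v x)\<^sup>2"])
  show "integrable (lebesgue_on \<Omega>) (\<lambda>x. (u x)\<^sup>2 + (v x)\<^sup>2)"
    using assms by (intro Bochner_Integration.integrable_add L2_integrable_square)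
  show "(\<lambda>x. u x * v x) \<in> borel_measurable (lebesgue_on \<Omega>)"
    using assms L2_borel_measurable by measurable
  have "\<bar>a * b\<bar> \<le> a\<^sup>2 + b\<^sup>2" for a b :: real
  proof -
    have "2 * \<bar>a * b\<bar> \<le> a\<^sup>2 + b\<^sup>2"
      using zero_le_power2[of "\<bar>a\<bar> - \<bar>b\<bar>"] by (simp add: power2_diff abs_mult)
    then show ?thesis by simp
  qed
  then show "AE x in lebesgue_on \<Omega>. norm (u x * v x) \<le> norm ((u x)\<^sup>2 + (v x)\<^sup>2)"
    by (auto intro!: AE_I2)
qed

lemma L2_cmult:
  assumes "u \<in> L2 \<Omega>"
  shows "(\<lambda>x. c * u x) \<in> L2 \<Omega>"
proof -
  have "(\<lambda>x. c * u x) \<in> borel_measurable (lebesgue_on \<Omega>)"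
    using assms L2_borel_measurable by measurable
  moreover have "integrable (lebesgue_on \<Omega>) (\<lambda>x. (c * u x)\<^sup>2)"
    using integrable_mult_right[OF L2_integrable_square[OF assms], of "c\<^sup>2"]
    by (simp add: power_mult_distrib)
  ultimately show ?thesis unfolding L2_def by simp
qed

lemma L2_add:
  assumes "u \<in> L2 \<Omega>" "v \<in> L2 \<Omega>"
  shows "(\<lambda>x. u x + v x) \<in> L2 \<Omega>"
proof -
  have "integrable (lebesgue_on \<Omega>) (\<lambda>x. 2 * u x * v x)"
    using L2_integrable_mult[OF L2_cmult[OF assms(1)] assms(2)] .
  then have "integrable (lebesgue_on \<Omega>) (\<lambda>x. (u x)\<^sup>2 + (v x)\<^sup>2 + 2 * u x * v x)"
    using assms by (intro Bochner_Integration.integrable_add L2_integrable_square)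
  then have "integrable (lebesgue_on \<Omega>) (\<lambda>x. (u x + v x)\<^sup>2)"
    by (simp only: power2_sum)
  moreover have "(\<lambda>x. u x + v x) \<in> borel_measurable (lebesgue_on \<Omega>)"
    using assms L2_borel_measurable by measurable
  ultimately show ?thesis unfolding L2_def by simp
qed

lemma L2_diff:
  assumes "u \<in> L2 \<Omega>" "v \<in> L2 \<Omega>"
  shows "(\<lambda>x. u x - v x) \<in> L2 \<Omega>"
  using L2_add[OF assms(1) L2_cmult[OF assms(2), of "-1"]] by simp

lemma L2_zero: "(\<lambda>x. 0) \<in> L2 \<Omega>"
  unfolding L2_def by simp

lemma L2_norm_nonneg: "L2_norm \<Omega> u \<ge> 0"
  unfolding L2_norm_def by (simp add: integral_nonneg_AE)

lemma L2_norm_square: "(L2_norm \<Omega> u)\<^sup>2 = integral\<^sup>L (lebesgue_on \<Omega>) (\<lambda>x. (u x)\<^sup>2)"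
  unfolding L2_norm_def by (simp add: integral_nonneg_AE)

lemma L2_norm_cmult: "L2_norm \<Omega> (\<lambda>x. c * u x) = \<bar>c\<bar> * L2_norm \<Omega> u"
  unfolding L2_norm_def by (simp add: power_mult_distrib real_sqrt_mult)

lemma L2_inner_cmult_right: "L2_inner \<Omega> g (\<lambda>x. c * u x) = c * L2_inner \<Omega> g u"
  unfolding L2_inner_def by (simp add: mult.left_commute)

lemma L2_inner_diff_left:
  assumes "a \<in> L2 \<Omega>" "b \<in> L2 \<Omega>" "d \<in> L2 \<Omega>"
  shows "L2_inner \<Omega> (\<lambda>x. a x - b x) d = L2_inner \<Omega> a d - L2_inner \<Omega> b d"
  unfolding L2_inner_def left_diff_distrib
  using assms by (simp add: Bochner_Integration.integral_diff L2_integrable_mult)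

lemma le_sqrt_mult_sqrt_if_quadratic_bound:
  fixes A B x :: real
  assumes "0 \<le> A" "0 \<le> B" and quadratic: "\<And>c. c > 0 \<Longrightarrow> 2 * c * x \<le> c\<^sup>2 * A + B"
  shows "x \<le> sqrt A * sqrt B"
proof (cases "x \<le> 0")
  case True
  moreover have "0 \<le> sqrt A * sqrt B" using assms by simp
  ultimately show ?thesis by linarith
next
  case False
  consider "A = 0" | "B = 0" | "A > 0" "B > 0"
    using assms by linarith
  then show ?thesis
  proof cases
    case 1
    then have "2 * ((B + 1) / (2 * x)) * x \<le> B"
      using quadratic[of "(B + 1) / (2 * x)"] False assms(2) by simp
    then show ?thesis using False by simp
  next
    case 2
    define y where "y = x / (A + 1)"
    have "y > 0" "x = (A + 1) * y"
      using False assms(1) by (simp_all add: y_def)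
    then have "y\<^sup>2 * (2 * (A + 1)) \<le> y\<^sup>2 * A"
      using quadratic[of y] 2 by (simp add: power2_eq_square algebra_simps)
    then have "2 * (A + 1) \<le> A"
      using \<open>y > 0\<close> by simp
    then show ?thesis using assms(1) by simp
  next
    case 3
    define c where "c = sqrt B / sqrt A"
    have "c > 0" "c\<^sup>2 * A = B"
      using 3 by (simp_all add: c_def power_divide)
    then have "x \<le> B / c"
      using quadratic[of c] by (simp add: field_simps)
    also have "B / c = sqrt A * sqrt B"
      using 3 unfolding c_def by (simp add: field_simps)
    finally show ?thesis .
  qed
qed

lemma L2_Cauchy_Schwarz:
  assumes "u \<in> L2 \<Omega>" "v \<in> L2 \<Omega>"
  shows "L2_inner \<Omega> u v \<le> L2_norm \<Omega> u * L2_norm \<Omega> v"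
  unfolding L2_norm_def
proof (rule le_sqrt_mult_sqrt_if_quadratic_bound)
  let ?M = "lebesgue_on \<Omega>"
  show "0 \<le> integral\<^sup>L ?M (\<lambda>x. (u x)\<^sup>2)" "0 \<le> integral\<^sup>L ?M (\<lambda>x. (v x)\<^sup>2)"
    by (simp_all add: integral_nonneg_AE)
  fix c :: real
  assume "c > 0"
  have "integral\<^sup>L ?M (\<lambda>x. 2 * c * (u x * v x)) \<le> integral\<^sup>L ?M (\<lambda>x. c\<^sup>2 * (u x)\<^sup>2 + (v x)\<^sup>2)"
  proof (rule integral_mono)
    show "integrable ?M (\<lambda>x. 2 * c * (u x * v x))"
      using assms by (intro integrable_mult_right L2_integrable_mult)
    show "integrable ?M (\<lambda>x. c\<^sup>2 * (u x)\<^sup>2 + (v x)\<^sup>2)"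
      using assms by (intro Bochner_Integration.integrable_add integrable_mult_right L2_integrable_square)
    show "2 * c * (u x * v x) \<le> c\<^sup>2 * (u x)\<^sup>2 + (v x)\<^sup>2" for x
      using zero_le_power2[of "c * u x - v x"] by (simp add: power2_eq_square algebra_simps)
  qed
  also have "\<dots> = c\<^sup>2 * integral\<^sup>L ?M (\<lambda>x. (u x)\<^sup>2) + integral\<^sup>L ?M (\<lambda>x. (v x)\<^sup>2)"
    using assms by (subst Bochner_Integration.integral_add) (auto intro!: L2_integrable_square)
  finally show "2 * c * L2_inner \<Omega> u v \<le> \<dots>"
    unfolding L2_inner_def by simp
qed

lemma frechet_imp_line_derivative:
  assumes d: "d \<in> L2 \<Omega>"
    and frechet: "\<forall>\<epsilon>>0. \<exists>\<delta>>0. \<forall>h\<in>L2 \<Omega>. L2_norm \<Omega> h < \<delta> \<longrightarrow>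
       \<bar>f (\<lambda>x. u x + t * d x + h x) - f (\<lambda>x. u x + t * d x) - L2_inner \<Omega> g h\<bar> \<le> \<epsilon> * L2_norm \<Omega> h"
  shows "((\<lambda>s. f (\<lambda>x. u x + s * d x)) has_real_derivative L2_inner \<Omega> g d) (at t)"
  unfolding has_field_derivative_def has_derivative_at_alt
proof (intro conjI allI impI bounded_linear_mult_right)
  define N where "N = L2_norm \<Omega> d"
  have N: "N \<ge> 0" unfolding N_def by (rule L2_norm_nonneg)
  fix e :: real
  assume "e > 0"
  then have "e / (N + 1) > 0" using N by simp
  with frechet obtain \<delta> where "\<delta> > 0" and \<delta>: "\<forall>h\<in>L2 \<Omega>. L2_norm \<Omega> h < \<delta> \<longrightarrow>
      \<bar>f (\<lambda>x. u x + t * d x + h x) - f (\<lambda>x. u x + t * d x) - L2_inner \<Omega> g h\<bar>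
        \<le> e / (N + 1) * L2_norm \<Omega> h"
    by blast
  show "\<exists>r>0. \<forall>s. norm (s - t) < r \<longrightarrow>
    norm (f (\<lambda>x. u x + s * d x) - f (\<lambda>x. u x + t * d x) - L2_inner \<Omega> g d * (s - t))
      \<le> e * norm (s - t)"
  proof (intro exI[of _ "\<delta> / (N + 1)"] conjI allI impI)
    show "\<delta> / (N + 1) > 0" using \<open>\<delta> > 0\<close> N by simp
    fix s :: real
    assume "norm (s - t) < \<delta> / (N + 1)"
    then have small: "\<bar>s - t\<bar> * (N + 1) < \<delta>"
      using N by (simp add: field_simps)
    have norm_h: "L2_norm \<Omega> (\<lambda>x. (s - t) * d x) = \<bar>s - t\<bar> * N"
      unfolding N_def by (rule L2_norm_cmult)
    have "\<bar>s - t\<bar> * N \<le> \<bar>s - t\<bar> * (N + 1)" by (simp add: mult_left_mono)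
    then have "L2_norm \<Omega> (\<lambda>x. (s - t) * d x) < \<delta>"
      using small norm_h by linarith
    then have "\<bar>f (\<lambda>x. u x + t * d x + (s - t) * d x) - f (\<lambda>x. u x + t * d x)
        - L2_inner \<Omega> g (\<lambda>x. (s - t) * d x)\<bar> \<le> e / (N + 1) * L2_norm \<Omega> (\<lambda>x. (s - t) * d x)"
      using \<delta> L2_cmult[OF d] by blast
    then have "\<bar>f (\<lambda>x. u x + t * d x + (s - t) * d x) - f (\<lambda>x. u x + t * d x)
        - (s - t) * L2_inner \<Omega> g d\<bar> \<le> e / (N + 1) * (\<bar>s - t\<bar> * N)"
      by (simp only: norm_h L2_inner_cmult_right)
    also have "\<dots> \<le> e * \<bar>s - t\<bar>"
      using \<open>e > 0\<close> N by (simp add: field_simps mult_left_mono)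
    finally show "norm (f (\<lambda>x. u x + s * d x) - f (\<lambda>x. u x + t * d x) - L2_inner \<Omega> g d * (s - t))
        \<le> e * norm (s - t)"
      by (simp add: algebra_simps)
  qed
qed

lemma descent_lemma:
  assumes A: "assumptionA \<Omega> f G Lf" and u: "u \<in> L2 \<Omega>" and d: "d \<in> L2 \<Omega>"
  shows "f (\<lambda>x. u x + d x) \<le> f u + L2_inner \<Omega> (G u) d + Lf / 2 * (L2_norm \<Omega> d)\<^sup>2"
proof -
  define D where "D = L2_inner \<Omega> (G u) d"
  define N where "N = L2_norm \<Omega> d"
  have N: "N \<ge> 0" unfolding N_def by (rule L2_norm_nonneg)
  have G: "\<And>v. v \<in> L2 \<Omega> \<Longrightarrow> G v \<in> L2 \<Omega>"
    and frechet: "\<And>v. v \<in> L2 \<Omega> \<Longrightarrow> \<forall>\<epsilon>>0. \<exists>\<delta>>0. \<forall>h\<in>L2 \<Omega>. L2_norm \<Omega> h < \<delta> \<longrightarrow>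
           \<bar>f (\<lambda>x. v x + h x) - f v - L2_inner \<Omega> (G v) h\<bar> \<le> \<epsilon> * L2_norm \<Omega> h"
    and lipschitz: "\<And>v w. v \<in> L2 \<Omega> \<Longrightarrow> w \<in> L2 \<Omega> \<Longrightarrow>
        L2_norm \<Omega> (\<lambda>x. G v x - G w x) \<le> Lf * L2_norm \<Omega> (\<lambda>x. v x - w x)"
    using A unfolding assumptionA_def by blast+
  define \<psi> where "\<psi> = (\<lambda>t. f (\<lambda>x. u x + t * d x) - t * D - Lf / 2 * t\<^sup>2 * N\<^sup>2)"
  have "\<psi> 1 \<le> \<psi> 0"
  proof (rule DERIV_nonpos_imp_nonincreasing[of 0 1 \<psi>])
    fix t :: real
    assume t: "0 \<le> t" "t \<le> 1"
    define w where "w = (\<lambda>x. u x + t * d x)"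
    have w: "w \<in> L2 \<Omega>" unfolding w_def using u d by (intro L2_add L2_cmult)
    have f': "((\<lambda>s. f (\<lambda>x. u x + s * d x)) has_real_derivative L2_inner \<Omega> (G w) d) (at t)"
      unfolding w_def by (rule frechet_imp_line_derivative[OF d frechet[OF w, unfolded w_def]])
    have \<psi>': "(\<psi> has_real_derivative L2_inner \<Omega> (G w) d - D - Lf / 2 * (2 * t) * N\<^sup>2) (at t)"
      unfolding \<psi>_def by (rule derivative_eq_intros f' refl | simp)+
    have "L2_inner \<Omega> (G w) d - D = L2_inner \<Omega> (\<lambda>x. G w x - G u x) d"
      unfolding D_def using G[OF w] G[OF u] d by (simp add: L2_inner_diff_left)
    also have "\<dots> \<le> L2_norm \<Omega> (\<lambda>x. G w x - G u x) * N"
      unfolding N_def using G[OF w] G[OF u] d by (intro L2_Cauchy_Schwarz L2_diff)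
    also have "\<dots> \<le> Lf * L2_norm \<Omega> (\<lambda>x. t * d x) * N"
      using lipschitz[OF w u] N by (simp add: w_def mult_right_mono)
    also have "\<dots> = Lf * t * N\<^sup>2"
      unfolding N_def L2_norm_cmult using t by (simp add: power2_eq_square)
    finally have "L2_inner \<Omega> (G w) d - D - Lf / 2 * (2 * t) * N\<^sup>2 \<le> 0"
      by simp
    with \<psi>' show "\<exists>y. (\<psi> has_real_derivative y) (at t) \<and> y \<le> 0"
      by blast
  qed simp
  then show ?thesis unfolding \<psi>_def D_def N_def by simp
qed

lemma model_obj_minimizer_descent:
  assumes A: "assumptionA \<Omega> f G Lf"
    and uk: "uk \<in> L2 \<Omega>" "int_delta_Z \<Omega> uk = 0"
    and v: "v \<in> L2 \<Omega>" "model_obj \<Omega> f G L uk v \<le> model_obj \<Omega> f G L uk uk"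
  shows "f v \<le> f uk - (L - Lf) / 2 * (L2_norm \<Omega> (\<lambda>x. v x - uk x))\<^sup>2"
proof -
  define d where "d = (\<lambda>x. v x - uk x)"
  define N where "N = (L2_norm \<Omega> d)\<^sup>2"
  have "ereal (f uk + L2_inner \<Omega> (G uk) d + L / 2 * N) \<le> model_obj \<Omega> f G L uk v"
    unfolding model_obj_def d_def N_def by (simp add: add_increasing2)
  also have "model_obj \<Omega> f G L uk v \<le> ereal (f uk)"
    using v(2) uk(2) by (simp add: model_obj_def L2_inner_def L2_norm_def zero_ennreal.rep_eq)
  finally have model: "L2_inner \<Omega> (G uk) d + L / 2 * N \<le> 0"
    by simp
  have "(\<lambda>x. uk x + d x) = v" unfolding d_def by simp
  then have "f v \<le> f uk + L2_inner \<Omega> (G uk) d + Lf / 2 * N"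
    using descent_lemma[OF A uk(1), of d] L2_diff[OF v(1) uk(1)] unfolding d_def N_def by simp
  with model show ?thesis
    unfolding d_def[symmetric] N_def[symmetric] by (simp add: left_diff_distrib diff_divide_distrib)
qed

lemma int_delta_Z_finite_imp_integer_ae:
  assumes "u \<in> L2 \<Omega>" "int_delta_Z \<Omega> u \<noteq> \<infinity>"
  shows "AE x in lebesgue_on \<Omega>. u x \<in> \<int>"
proof -
  have "\<int> \<in> sets (borel :: real measure)" by (simp add: borel_closed)
  then have "(\<lambda>x. if u x \<in> \<int> then 0 else \<infinity> :: ennreal) \<in> borel_measurable (lebesgue_on \<Omega>)"
    using assms(1) L2_borel_measurable by measurable
  from nn_integral_noteq_infinite[OF this] assms(2)
  have "AE x in lebesgue_on \<Omega>. (if u x \<in> \<int> then 0 else \<infinity> :: ennreal) \<noteq> \<infinity>"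
    unfolding int_delta_Z_def by simp
  then show ?thesis by (rule AE_mp) (auto intro!: AE_I2 split: if_splits)
qed

lemma int_delta_Z_eq_0_if_integer_ae:
  assumes "AE x in lebesgue_on \<Omega>. u x \<in> \<int>"
  shows "int_delta_Z \<Omega> u = 0"
proof -
  have "int_delta_Z \<Omega> u = (\<integral>\<^sup>+ x. 0 \<partial>(lebesgue_on \<Omega>))"
    unfolding int_delta_Z_def by (rule nn_integral_cong_AE) (use assms in \<open>auto elim: AE_mp\<close>)
  then show ?thesis by simp
qed

lemma model_obj_minimizer_integer_ae:
  assumes "v \<in> L2 \<Omega>" "model_obj \<Omega> f G L uk v \<le> model_obj \<Omega> f G L uk (\<lambda>x. 0)"
  shows "AE x in lebesgue_on \<Omega>. v x \<in> \<int>"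
proof (rule int_delta_Z_finite_imp_integer_ae[OF assms(1)])
  have "int_delta_Z \<Omega> (\<lambda>x. 0) = 0" by (rule int_delta_Z_eq_0_if_integer_ae) simp
  then show "int_delta_Z \<Omega> v \<noteq> \<infinity>"
    using assms(2) unfolding model_obj_def
    by (auto simp: zero_ennreal.rep_eq simp del: ereal_plus_eq_PInfty)
qed

lemma finite_measure_lebesgue_on:
  assumes "\<Omega> \<in> sets lebesgue" "emeasure lebesgue \<Omega> < \<infinity>"
  shows "finite_measure (lebesgue_on \<Omega>)"
  using assms by (intro finite_measureI) (simp add: emeasure_restrict_space space_restrict_space)

lemma L2_integrable_abs:
  assumes "finite_measure (lebesgue_on \<Omega>)" "u \<in> L2 \<Omega>"
  shows "integrable (lebesgue_on \<Omega>) (\<lambda>x. \<bar>u x\<bar>)"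
proof (rule Bochner_Integration.integrable_bound[where f="\<lambda>x. 1 + (u x)\<^sup>2"])
  show "integrable (lebesgue_on \<Omega>) (\<lambda>x. 1 + (u x)\<^sup>2)"
    using assms by (intro Bochner_Integration.integrable_add L2_integrable_square
        finite_measure.integrable_const)
  show "(\<lambda>x. \<bar>u x\<bar>) \<in> borel_measurable (lebesgue_on \<Omega>)"
    using assms(2) L2_borel_measurable by measurable
  have "\<bar>a\<bar> \<le> 1 + a\<^sup>2" for a :: real
    using zero_le_power2[of "\<bar>a\<bar> - 1"] by (simp add: power2_diff)
  then show "AE x in lebesgue_on \<Omega>. norm \<bar>u x\<bar> \<le> norm (1 + (u x)\<^sup>2)"
    by (auto intro!: AE_I2)
qed

lemma L2_sgn:
  assumes "finite_measure (lebesgue_on \<Omega>)" "a \<in> borel_measurable (lebesgue_on \<Omega>)"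
  shows "(\<lambda>x. sgn (a x)) \<in> L2 \<Omega>"
proof -
  have m: "(\<lambda>x. sgn (a x)) \<in> borel_measurable (lebesgue_on \<Omega>)" using assms(2) by measurable
  have "integrable (lebesgue_on \<Omega>) (\<lambda>x. (sgn (a x))\<^sup>2)"
    using m by (intro finite_measure.integrable_const_bound[OF assms(1), where B=1])
      (auto simp: sgn_if)
  then show ?thesis using m unfolding L2_def by auto
qed

lemma integer_valued_L1_le_L2_square:
  assumes "finite_measure (lebesgue_on \<Omega>)" "w \<in> L2 \<Omega>" "AE x in lebesgue_on \<Omega>. w x \<in> \<int>"
  shows "integral\<^sup>L (lebesgue_on \<Omega>) (\<lambda>x. \<bar>w x\<bar>) \<le> (L2_norm \<Omega> w)\<^sup>2"
  unfolding L2_norm_square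
proof (rule integral_mono_AE)
  show "integrable (lebesgue_on \<Omega>) (\<lambda>x. \<bar>w x\<bar>)" using assms(1,2) by (rule L2_integrable_abs)
  show "integrable (lebesgue_on \<Omega>) (\<lambda>x. (w x)\<^sup>2)" using assms(2) by (rule L2_integrable_square)
  have "\<bar>z\<bar> \<le> z\<^sup>2" if "z \<in> \<int>" for z :: real
  proof (cases "z = 0")
    case False
    then have "\<bar>z\<bar> * 1 \<le> \<bar>z\<bar> * \<bar>z\<bar>"
      using Ints_nonzero_abs_ge1[OF that] by (intro mult_left_mono) auto
    then show ?thesis by (simp add: power2_eq_square)
  qed simp
  with assms(3) show "AE x in lebesgue_on \<Omega>. \<bar>w x\<bar> \<le> (w x)\<^sup>2" by (auto elim: AE_mp)
qed

lemma summable_of_sufficient_decrease: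
  fixes F a :: "nat \<Rightarrow> real"
  assumes decrease: "\<And>k. F (Suc k) \<le> F k - \<kappa> * a k"
    and bounded: "\<And>k. c \<le> F k" and "\<kappa> > 0" and nonneg: "\<And>k. 0 \<le> a k"
  shows "summable a"
proof (rule bounded_imp_summable[OF nonneg])
  have telescope: "\<kappa> * (\<Sum>i<n. a i) \<le> F 0 - F n" for n
  proof (induction n)
    case (Suc n)
    have "\<kappa> * (\<Sum>i<Suc n. a i) = \<kappa> * (\<Sum>i<n. a i) + \<kappa> * a n"
      by (simp add: distrib_left)
    then show ?case using Suc.IH decrease[of n] by linarith
  qed simp
  fix n
  have "\<kappa> * (\<Sum>i\<le>n. a i) \<le> F 0 - c"
    using telescope[of "Suc n"] bounded[of "Suc n"] by (simp add: lessThan_Suc_atMost)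
  then show "(\<Sum>i\<le>n. a i) \<le> (F 0 - c) / \<kappa>"
    using \<open>\<kappa> > 0\<close> by (simp add: pos_le_divide_eq mult.commute)
qed

lemma L1_dist_le_sum_steps:
  assumes fm: "finite_measure (lebesgue_on \<Omega>)" and u: "\<And>k. u k \<in> L2 \<Omega>" and "k \<le> m"
  shows "integral\<^sup>L (lebesgue_on \<Omega>) (\<lambda>x. \<bar>u m x - u k x\<bar>)
    \<le> (\<Sum>i\<in>{k..<m}. integral\<^sup>L (lebesgue_on \<Omega>) (\<lambda>x. \<bar>u (Suc i) x - u i x\<bar>))"
  using \<open>k \<le> m\<close>
proof (induction m rule: dec_induct)
  case (step m)
  have integrable: "integrable (lebesgue_on \<Omega>) (\<lambda>x. \<bar>u i x - u j x\<bar>)" for i j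
    using L2_integrable_abs[OF fm L2_diff[OF u u]] .
  have "integral\<^sup>L (lebesgue_on \<Omega>) (\<lambda>x. \<bar>u (Suc m) x - u k x\<bar>)
      \<le> integral\<^sup>L (lebesgue_on \<Omega>) (\<lambda>x. \<bar>u (Suc m) x - u m x\<bar> + \<bar>u m x - u k x\<bar>)"
    by (rule integral_mono) (auto intro!: Bochner_Integration.integrable_add integrable)
  also have "\<dots> = integral\<^sup>L (lebesgue_on \<Omega>) (\<lambda>x. \<bar>u (Suc m) x - u m x\<bar>)
      + integral\<^sup>L (lebesgue_on \<Omega>) (\<lambda>x. \<bar>u m x - u k x\<bar>)"
    by (rule Bochner_Integration.integral_add) (rule integrable)+
  finally show ?case using step by simp
qed simp

lemma L1_dist_le_of_weak_conv:
  assumes fm: "finite_measure (lebesgue_on \<Omega>)"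
    and weak: "L2_weak_conv \<Omega> w ustar" and v: "v \<in> L2 \<Omega>"
    and bound: "eventually (\<lambda>m. integral\<^sup>L (lebesgue_on \<Omega>) (\<lambda>x. \<bar>w m x - v x\<bar>) \<le> B) sequentially"
  shows "integral\<^sup>L (lebesgue_on \<Omega>) (\<lambda>x. \<bar>v x - ustar x\<bar>) \<le> B"
proof -
  define s where "s = (\<lambda>x. sgn (v x - ustar x))"
  have w: "w m \<in> L2 \<Omega>" for m
    using weak unfolding L2_weak_conv_def by auto
  have ustar: "ustar \<in> L2 \<Omega>"
    using weak unfolding L2_weak_conv_def by auto
  have s: "s \<in> L2 \<Omega>"
    unfolding s_def using v ustar L2_borel_measurable by (intro L2_sgn[OF fm]) measurable
  have "(\<lambda>m. L2_inner \<Omega> v s - L2_inner \<Omega> (w m) s) \<longlonglongrightarrow> L2_inner \<Omega> v s - L2_inner \<Omega> ustar s"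
    using weak s unfolding L2_weak_conv_def by (intro tendsto_diff tendsto_const) auto
  also have "L2_inner \<Omega> v s - L2_inner \<Omega> ustar s = L2_inner \<Omega> (\<lambda>x. v x - ustar x) s"
    using v ustar s by (simp add: L2_inner_diff_left)
  also have "\<dots> = integral\<^sup>L (lebesgue_on \<Omega>) (\<lambda>x. \<bar>v x - ustar x\<bar>)"
    unfolding L2_inner_def s_def by (simp add: abs_sgn)
  finally have lim: "(\<lambda>m. L2_inner \<Omega> v s - L2_inner \<Omega> (w m) s)
      \<longlonglongrightarrow> integral\<^sup>L (lebesgue_on \<Omega>) (\<lambda>x. \<bar>v x - ustar x\<bar>)" .
  have le: "L2_inner \<Omega> v s - L2_inner \<Omega> (w m) s
      \<le> integral\<^sup>L (lebesgue_on \<Omega>) (\<lambda>x. \<bar>w m x - v x\<bar>)" for m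
  proof -
    have "L2_inner \<Omega> v s - L2_inner \<Omega> (w m) s = L2_inner \<Omega> (\<lambda>x. v x - w m x) s"
      using v w s by (simp add: L2_inner_diff_left)
    also have "\<dots> \<le> integral\<^sup>L (lebesgue_on \<Omega>) (\<lambda>x. \<bar>w m x - v x\<bar>)"
      unfolding L2_inner_def
    proof (rule integral_mono)
      show "integrable (lebesgue_on \<Omega>) (\<lambda>x. (v x - w m x) * s x)"
        using v w s by (intro L2_integrable_mult L2_diff)
      show "integrable (lebesgue_on \<Omega>) (\<lambda>x. \<bar>w m x - v x\<bar>)"
        using L2_integrable_abs[OF fm L2_diff[OF w v]] .
      show "(v x - w m x) * s x \<le> \<bar>w m x - v x\<bar>" for x
        unfolding s_def by (cases "v x - ustar x" "0 :: real" rule: linorder_cases) auto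
    qed
    finally show ?thesis .
  qed
  have "eventually (\<lambda>m. L2_inner \<Omega> v s - L2_inner \<Omega> (w m) s \<le> B) sequentially"
    using bound by eventually_elim (rule order_trans[OF le])
  then show ?thesis
    using tendsto_upperbound[OF lim] by simp
qed

lemma L1_tendsto_weak_cluster_point_of_summable_steps:
  assumes fm: "finite_measure (lebesgue_on \<Omega>)" and u: "\<And>k. u k \<in> L2 \<Omega>"
    and summable: "summable (\<lambda>k. integral\<^sup>L (lebesgue_on \<Omega>) (\<lambda>x. \<bar>u (Suc k) x - u k x\<bar>))"
    and "strict_mono r" and weak: "L2_weak_conv \<Omega> (u \<circ> r) ustar"
  shows "(\<lambda>k. integral\<^sup>L (lebesgue_on \<Omega>) (\<lambda>x. \<bar>u k x - ustar x\<bar>)) \<longlonglongrightarrow> 0"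
proof -
  define e where "e = (\<lambda>k. integral\<^sup>L (lebesgue_on \<Omega>) (\<lambda>x. \<bar>u (Suc k) x - u k x\<bar>))"
  define tail where "tail k = suminf e - sum e {..<k}" for k
  have e: "0 \<le> e k" for k unfolding e_def by (simp add: integral_nonneg_AE)
  have "tail \<longlonglongrightarrow> suminf e - suminf e"
    unfolding tail_def using summable by (intro tendsto_diff tendsto_const summable_LIMSEQ) (simp add: e_def)
  then have tail_0: "tail \<longlonglongrightarrow> 0" by simp
  have "integral\<^sup>L (lebesgue_on \<Omega>) (\<lambda>x. \<bar>u k x - ustar x\<bar>) \<le> tail k" for k
  proof (rule L1_dist_le_of_weak_conv[OF fm weak u])
    show "eventually (\<lambda>m. integral\<^sup>L (lebesgue_on \<Omega>) (\<lambda>x. \<bar>(u \<circ> r) m x - u k x\<bar>) \<le> tail k) sequentially"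
      unfolding eventually_sequentially
    proof (intro exI allI impI)
      fix m assume "k \<le> m"
      then have "k \<le> r m" using seq_suble[OF \<open>strict_mono r\<close>, of m] by linarith
      then have "sum e {..<k} + sum e {k..<r m} = sum e {..<r m}"
        by (metis atLeast0LessThan sum.atLeastLessThan_concat zero_le)
      moreover have "sum e {..<r m} \<le> suminf e"
        using summable e by (intro sum_le_suminf) (auto simp: e_def[symmetric])
      moreover have "integral\<^sup>L (lebesgue_on \<Omega>) (\<lambda>x. \<bar>u (r m) x - u k x\<bar>) \<le> sum e {k..<r m}"
        unfolding e_def using L1_dist_le_sum_steps[OF fm u \<open>k \<le> r m\<close>] .
      ultimately show "integral\<^sup>L (lebesgue_on \<Omega>) (\<lambda>x. \<bar>(u \<circ> r) m x - u k x\<bar>) \<le> tail k"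
        unfolding tail_def by simp
    qed
  qed
  then show ?thesis
    by (intro Lim_null_comparison[OF _ tail_0]) (auto simp: integral_nonneg_AE)
qed

theorem theorem5p4:
  fixes \<Omega> :: "(real^'n) set"
    and f :: "(real^'n \<Rightarrow> real) \<Rightarrow> real"
    and G :: "(real^'n \<Rightarrow> real) \<Rightarrow> (real^'n \<Rightarrow> real)"
    and Lf L :: real
    and u :: "nat \<Rightarrow> real^'n \<Rightarrow> real"
    and ustar :: "real^'n \<Rightarrow> real"
  assumes "\<Omega> \<in> sets lebesgue"
    and "emeasure lebesgue \<Omega> < \<infinity>"
    and "assumptionA \<Omega> f G Lf"
    and "L > Lf"
    and "u 0 \<in> L2 \<Omega>"
    and "\<And>k. u (Suc k) \<in> L2 \<Omega> \<and>
              (\<forall>v\<in>L2 \<Omega>. model_obj \<Omega> f G L (u k) (u (Suc k)) \<le> model_obj \<Omega> f G L (u k) v)"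
    and "ustar \<in> L2 \<Omega>"
    and "\<exists>r. strict_mono r \<and> L2_weak_conv \<Omega> (u \<circ> r) ustar"
  shows "(\<lambda>k. integral\<^sup>L (lebesgue_on \<Omega>) (\<lambda>x. \<bar>u k x - ustar x\<bar>)) \<longlonglongrightarrow> 0"
proof -
  have fm: "finite_measure (lebesgue_on \<Omega>)" using assms(1,2) by (rule finite_measure_lebesgue_on)
  have u: "u k \<in> L2 \<Omega>" for k using assms(5,6) by (cases k) auto
  have integer: "AE x in lebesgue_on \<Omega>. u (Suc k) x \<in> \<int>" for k
    using assms(6) L2_zero by (blast intro: model_obj_minimizer_integer_ae)
  define step where "step k = (L2_norm \<Omega> (\<lambda>x. u (Suc (Suc k)) x - u (Suc k) x))\<^sup>2" for k
  have decrease: "f (u (Suc (Suc k))) \<le> f (u (Suc k)) - (L - Lf) / 2 * step k" for k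
    unfolding step_def using assms(3,6) u int_delta_Z_eq_0_if_integer_ae[OF integer]
    by (blast intro: model_obj_minimizer_descent)
  have L1_step: "integral\<^sup>L (lebesgue_on \<Omega>) (\<lambda>x. \<bar>u (Suc (Suc k)) x - u (Suc k) x\<bar>) \<le> step k" for k
    unfolding step_def using integer[of k] integer[of "Suc k"]
    by (intro integer_valued_L1_le_L2_square[OF fm L2_diff[OF u u]]) (auto elim: AE_mp intro: Ints_diff)
  obtain c where "\<And>v. v \<in> L2 \<Omega> \<Longrightarrow> c \<le> f v"
    using assms(3) unfolding assumptionA_def by blast
  then have "summable step"
    using decrease assms(4) u
    by (intro summable_of_sufficient_decrease[where F="\<lambda>k. f (u (Suc k))" and \<kappa>="(L - Lf) / 2"])
      (auto simp: step_def)
  then have "summable (\<lambda>k. integral\<^sup>L (lebesgue_on \<Omega>) (\<lambda>x. \<bar>u (Suc (Suc k)) x - u (Suc k) x\<bar>))"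
    by (rule summable_comparison_test'[where N=0]) (simp add: integral_nonneg_AE L1_step)
  then have "summable (\<lambda>k. integral\<^sup>L (lebesgue_on \<Omega>) (\<lambda>x. \<bar>u (Suc k) x - u k x\<bar>))"
    by (subst summable_Suc_iff[symmetric])
  moreover obtain r where "strict_mono r" "L2_weak_conv \<Omega> (u \<circ> r) ustar"
    using assms(8) by blast
  ultimately show ?thesis
    using L1_tendsto_weak_cluster_point_of_summable_steps[OF fm, of u] u by blast
qed

end
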